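(* Let $\succ=(\succ_s)_{s\in S}$ be a priority profile such that every $\succ_s$ is a partial order on $I$. Suppose $K\ge 1$ and $\mu_1,\dots,\mu_K$ are stable matchings for $\succ$ such that $\mu_{k'}$ Pareto dominates $\mu_k$ for all $1\le k<k'\le K$. Then there exists an extension profile $\succ^*\in\mathcal{E}(\succ)$ such that every one of $\mu_1,\dots,\mu_K$ is stable for $\succ^*$.
   Context: All binary relations $B$ considered are asymmetric: $(x,y)\in B$ implies $(y,x)\notin B$. A binary relation $B$ on $X$ is complete if $x\neq y$ implies $(x,y)\in B$ or $(y,x)\in B$; negatively transitive if $(x,y)\notin B$ and $(y,z)\notin B$ imply $(x,z)\notin B$; transitive if $(x,y),(y,z)\in B$ imply $(x,z)\in B$; acyclic if for all $K\ge2$ and $x_0,\dots,x_K\in X$, [$(x_{k-1},x_k)\in B$ and $(x_k,x_{k-1})\notin B$ for all $k=1,\dots,K$] implies $(x_K,x_0)\notin B$. A partial order is an asymmetric transitive relation; a weak order is a negatively transitive partial order; a total order is a complete weak order. $\mathcal{A},\mathcal{P},\mathcal{W},\mathcal{T}$ denote the sets of acyclic, partial order, weak order, total order (asymmetric) relations on $I$. School choice setup: $I$ is a finite set of students with $|I|\ge 3$, $S$ a finite set of schools. Each student $i$ has a total order $P_i$ on $S\cup\{\emptyset\}$ ($\emptyset$ = outside option); $sR_is'$ means $sP_is'$ or $s=s'$. Each school $s$ has capacity $q_s\in\mathbb{Z}_{++}$ and a priority relation $\succ_s$, an asymmetric binary relation on $I$ ($(i,j)\in\succ_s$: $i$ has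 higher priority than $j$ at $s$). A matching $\mu$ assigns each $i$ to $\mu(i)\in S\cup\{\emptyset\}$, with $\mu(s)=\{i:\mu(i)=s\}$. $\mu$ is individually rational if $\mu(i)R_i\emptyset$ for all $i$; non-wasteful if $sP_i\mu(i)$ implies $|\mu(s)|=q_s$; fair for $\succ$ if there are no $s$, $j\in\mu(s)$, $i\notin\mu(s)$ with $sR_i\mu(i)$ and $(i,j)\in\succ_s$; stable for $\succ$ if individually rational, non-wasteful and fair for $\succ$ (capacities $|\mu(s)|\le q_s$ are required of matchings). $\mu$ is Pareto dominated by $\mu'$ if $\mu'(i)R_i\mu(i)$ for all $i$ and $\mu'(i)P_i\mu(i)$ for some $i$. An extension of $\succ_s$ is a total order $\hat\succ_s$ on $I$ with $\succ_s\subseteq\hat\succ_s$; $E(\succ_s)$ is the set of extensions of $\succ_s$ and $\mathcal{E}(\succ)$ the set of profiles $(\succ'_s)_{s\in S}$ with $\succ'_s\in E(\succ_s)$ for all $s$. *)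

theory Defs
  imports Main
begin

(* Binary relations are sets of pairs; (x,y) \<in> B means x B y. *)

definition asym_rel :: "('a \<times> 'a) set \<Rightarrow> bool" where
  "asym_rel B \<longleftrightarrow> (\<forall>x y. (x,y) \<in> B \<longrightarrow> (y,x) \<notin> B)"

definition complete_rel :: "('a \<times> 'a) set \<Rightarrow> bool" where
  "complete_rel B \<longleftrightarrow> (\<forall>x y. x \<noteq> y \<longrightarrow> (x,y) \<in> B \<or> (y,x) \<in> B)"

definition neg_trans_rel :: "('a \<times> 'a) set \<Rightarrow> bool" where
  "neg_trans_rel B \<longleftrightarrow> (\<forall>x y z. (x,y) \<notin> B \<longrightarrow> (y,z) \<notin> B \<longrightarrow> (x,z) \<notin> B)"

definition trans_rel :: "('a \<times> 'a) set \<Rightarrow> bool" where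
  "trans_rel B \<longleftrightarrow> (\<forall>x y z. (x,y) \<in> B \<longrightarrow> (y,z) \<in> B \<longrightarrow> (x,z) \<in> B)"

definition partial_order_rel :: "('a \<times> 'a) set \<Rightarrow> bool" where
  "partial_order_rel B \<longleftrightarrow> asym_rel B \<and> trans_rel B"

definition weak_order_rel :: "('a \<times> 'a) set \<Rightarrow> bool" where
  "weak_order_rel B \<longleftrightarrow> partial_order_rel B \<and> neg_trans_rel B"

definition total_order_rel :: "('a \<times> 'a) set \<Rightarrow> bool" where
  "total_order_rel B \<longleftrightarrow> weak_order_rel B \<and> complete_rel B"

definition extensions :: "('a \<times> 'a) set \<Rightarrow> ('a \<times> 'a) set set" where
  "extensions B = {B'. total_order_rel B' \<and> B \<subseteq> B'}"

definition ext_profiles :: "('s \<Rightarrow> ('i \<times> 'i) set) \<Rightarrow> ('s \<Rightarrow> ('i \<times> 'i) set) set" where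
  "ext_profiles pr = {pr'. \<forall>s. pr' s \<in> extensions (pr s)}"

(* School choice. Schools: type 's; S \<union> {\<emptyset>} is 's option with None = outside option.
   P i : strict preference of student i on 's option. *)

definition weak_pref :: "('i \<Rightarrow> ('s option \<times> 's option) set) \<Rightarrow> 'i \<Rightarrow> 's option \<Rightarrow> 's option \<Rightarrow> bool" where
  "weak_pref P i a b \<longleftrightarrow> (a,b) \<in> P i \<or> a = b"

definition assigned :: "('i \<Rightarrow> 's option) \<Rightarrow> 's \<Rightarrow> 'i set" where
  "assigned \<mu> s = {i. \<mu> i = Some s}"

definition is_matching :: "('s \<Rightarrow> nat) \<Rightarrow> ('i \<Rightarrow> 's option) \<Rightarrow> bool" where
  "is_matching q \<mu> \<longleftrightarrow> (\<forall>s. card (assigned \<mu> s) \<le> q s)"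

definition indiv_rational :: "('i \<Rightarrow> ('s option \<times> 's option) set) \<Rightarrow> ('i \<Rightarrow> 's option) \<Rightarrow> bool" where
  "indiv_rational P \<mu> \<longleftrightarrow> (\<forall>i. weak_pref P i (\<mu> i) None)"

definition non_wasteful :: "('i \<Rightarrow> ('s option \<times> 's option) set) \<Rightarrow> ('s \<Rightarrow> nat) \<Rightarrow> ('i \<Rightarrow> 's option) \<Rightarrow> bool" where
  "non_wasteful P q \<mu> \<longleftrightarrow> (\<forall>i s. (Some s, \<mu> i) \<in> P i \<longrightarrow> card (assigned \<mu> s) = q s)"

definition fair :: "('i \<Rightarrow> ('s option \<times> 's option) set) \<Rightarrow> ('s \<Rightarrow> ('i \<times> 'i) set) \<Rightarrow> ('i \<Rightarrow> 's option) \<Rightarrow> bool" where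
  "fair P pr \<mu> \<longleftrightarrow> \<not> (\<exists>s i j. j \<in> assigned \<mu> s \<and> i \<notin> assigned \<mu> s \<and>
                        weak_pref P i (Some s) (\<mu> i) \<and> (i,j) \<in> pr s)"

definition stable :: "('i \<Rightarrow> ('s option \<times> 's option) set) \<Rightarrow> ('s \<Rightarrow> nat) \<Rightarrow> ('s \<Rightarrow> ('i \<times> 'i) set) \<Rightarrow> ('i \<Rightarrow> 's option) \<Rightarrow> bool" where
  "stable P q pr \<mu> \<longleftrightarrow> is_matching q \<mu> \<and> indiv_rational P \<mu> \<and> non_wasteful P q \<mu> \<and> fair P pr \<mu>"

definition pareto_dominated_by :: "('i \<Rightarrow> ('s option \<times> 's option) set) \<Rightarrow> ('i \<Rightarrow> 's option) \<Rightarrow> ('i \<Rightarrow> 's option) \<Rightarrow> bool" where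
  "pareto_dominated_by P \<mu> \<mu>' \<longleftrightarrow> (\<forall>i. weak_pref P i (\<mu>' i) (\<mu> i)) \<and> (\<exists>i. (\<mu>' i, \<mu> i) \<in> P i)"

end

theory Submission imports Defs begin

text \<open>For each school s, collect the pairs (x, v) such that some matching of the chain seats x
  at s while v strictly prefers s to her own seat there; every extension of the priorities must
  rank x above v. Along a Pareto chain an agent who envies s in a later matching already envied
  it in every earlier one, and an agent seated at s never envies s later. Together with fairness
  of each matching this makes the envy pairs compose with each other through the priorities, so
  the union of priorities and envy pairs is acyclic; any linear extension of it (Szpilrajn) keeps
  every matching of the chain fair.\<close>

lemma trans_rel_iff_trans: "trans_rel R \<longleftrightarrow> trans R"
  unfolding trans_rel_def trans_def by blast

lemma finite_partial_order_extends_to_total_order: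
  fixes R :: "('a \<times> 'a) set"
  assumes "finite (UNIV :: 'a set)" and "partial_order_rel R"
  shows "\<exists>T. total_order_rel T \<and> R \<subseteq> T"
proof -
  let ?A = "{T :: ('a \<times> 'a) set. partial_order_rel T}"
  have "finite (UNIV :: ('a \<times> 'a) set set)"
    using assms(1) by (simp add: finite_prod Finite_Set.finite_set)
  then have "finite ?A" by (metis finite_subset subset_UNIV)
  moreover have "R \<in> ?A" using assms(2) by simp
  ultimately obtain T where "T \<in> ?A" "R \<subseteq> T" and maximal: "\<forall>T'\<in>?A. T \<subseteq> T' \<longrightarrow> T = T'"
    by (metis finite_has_maximal2)
  then have asym: "asym_rel T" and tr: "trans_rel T"
    by (simp_all add: partial_order_rel_def)
  have complete: "complete_rel T"
    unfolding complete_rel_def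
  proof (intro allI impI, rule ccontr)
    fix x y assume "x \<noteq> y" and incomparable: "\<not> ((x, y) \<in> T \<or> (y, x) \<in> T)"
    \<comment> \<open>Adding x below y together with everything forced by transitivity stays a partial order.\<close>
    define T' where "T' = T \<union> {(a,b). (a = x \<or> (a,x) \<in> T) \<and> (y = b \<or> (y,b) \<in> T)}"
    have "partial_order_rel T'"
      using asym tr incomparable \<open>x \<noteq> y\<close>
      unfolding partial_order_rel_def asym_rel_def trans_rel_def T'_def by blast
    moreover have "T \<subseteq> T'" unfolding T'_def by blast
    ultimately have "T = T'" using maximal by blast
    moreover have "(x,y) \<in> T'" unfolding T'_def by auto
    ultimately show False using incomparable by simp
  qed
  then have "neg_trans_rel T"
    using asym tr unfolding asym_rel_def trans_rel_def complete_rel_def neg_trans_rel_def by metis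
  then show ?thesis using asym tr complete \<open>R \<subseteq> T\<close>
    unfolding total_order_rel_def weak_order_rel_def partial_order_rel_def by blast
qed

lemma trancl_Un_subset:
  assumes "trans R" and "L O L \<subseteq> L" and "L O R O L \<subseteq> L"
  shows "(R \<union> L)\<^sup>+ \<subseteq> R \<union> R\<^sup>= O L O R\<^sup>="
proof -
  let ?M = "R \<union> R\<^sup>= O L O R\<^sup>="
  have "R O R \<subseteq> R" using \<open>trans R\<close> by (rule trans_O_subset)
  then have closed: "?M O (R \<union> L) \<subseteq> ?M" using assms(2,3) by blast
  show ?thesis
  proof (rule subrelI)
    fix u v assume "(u, v) \<in> (R \<union> L)\<^sup>+"
    then show "(u, v) \<in> ?M"
    proof (induction rule: trancl_induct)
      case (step y z)
      then show ?case using closed by blast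
    qed blast
  qed
qed

lemma partial_order_trancl_Un:
  assumes "partial_order_rel R" and "L O L \<subseteq> L" and "L O R O L \<subseteq> L"
    and L_against_R: "\<And>x y. (x, y) \<in> L \<Longrightarrow> (y, x) \<notin> R\<^sup>="
  shows "partial_order_rel ((R \<union> L)\<^sup>+)"
proof -
  have "trans R" "irrefl R"
    using assms(1) by (auto simp: partial_order_rel_def asym_rel_def trans_rel_iff_trans irrefl_def)
  have "(u, u) \<notin> (R \<union> L)\<^sup>+" for u
  proof
    assume "(u, u) \<in> (R \<union> L)\<^sup>+"
    then have "(u, u) \<in> R \<union> R\<^sup>= O L O R\<^sup>=" using trancl_Un_subset[OF \<open>trans R\<close> assms(2,3)] by blast
    then obtain x y where "(u, x) \<in> R\<^sup>=" "(x, y) \<in> L" "(y, u) \<in> R\<^sup>="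
      using \<open>irrefl R\<close> by (auto simp: irrefl_def)
    then have "(y, x) \<in> R\<^sup>=" using \<open>trans R\<close> by (auto dest: transD)
    with \<open>(x, y) \<in> L\<close> L_against_R show False by blast
  qed
  then show ?thesis
    unfolding partial_order_rel_def asym_rel_def trans_rel_iff_trans by (meson trancl_trans trans_trancl)
qed

locale pareto_chain =
  fixes P :: "'i \<Rightarrow> ('s option \<times> 's option) set"
    and q :: "'s \<Rightarrow> nat"
    and pr :: "'s \<Rightarrow> ('i \<times> 'i) set"
    and \<mu> :: "nat \<Rightarrow> 'i \<Rightarrow> 's option"
    and K :: nat
  assumes pref_partial_order: "\<And>i. partial_order_rel (P i)"
    and prio_partial_order: "\<And>s. partial_order_rel (pr s)"
    and chain_stable: "\<And>k. k \<in> {1..K} \<Longrightarrow> stable P q pr (\<mu> k)"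
    and chain_dominates: "\<And>k k'. 1 \<le> k \<Longrightarrow> k < k' \<Longrightarrow> k' \<le> K \<Longrightarrow> pareto_dominated_by P (\<mu> k) (\<mu> k')"
begin

definition envied_by :: "'s \<Rightarrow> ('i \<times> 'i) set" where
  "envied_by s = {(x, v). \<exists>k\<in>{1..K}. \<mu> k x = Some s \<and> (Some s, \<mu> k v) \<in> P v}"

lemma pref_asym: "(a, b) \<in> P i \<Longrightarrow> (b, a) \<notin> P i"
  using pref_partial_order unfolding partial_order_rel_def asym_rel_def by blast

lemma pref_irrefl: "(a, a) \<notin> P i"
  using pref_asym by blast

lemma pref_trans: "(a, b) \<in> P i \<Longrightarrow> (b, c) \<in> P i \<Longrightarrow> (a, c) \<in> P i"
  using pref_partial_order unfolding partial_order_rel_def trans_rel_def by blast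

lemma chain_weakly_improves:
  assumes "1 \<le> k" "k \<le> k'" "k' \<le> K"
  shows "weak_pref P v (\<mu> k' v) (\<mu> k v)"
  using chain_dominates[of k k'] assms
  by (cases "k = k'") (auto simp: pareto_dominated_by_def weak_pref_def)

lemma envy_persists_backward:
  assumes "1 \<le> k" "k \<le> k'" "k' \<le> K" and "(Some s, \<mu> k' v) \<in> P v"
  shows "(Some s, \<mu> k v) \<in> P v"
  using chain_weakly_improves[OF assms(1-3), of v] assms(4) pref_trans
  unfolding weak_pref_def by auto

lemma seated_never_envies_later:
  assumes "1 \<le> k" "k \<le> k'" "k' \<le> K" and "\<mu> k x = Some s"
  shows "(Some s, \<mu> k' x) \<notin> P x"
  using chain_weakly_improves[OF assms(1-3), of x] assms(4) pref_asym pref_irrefl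
  unfolding weak_pref_def by metis

lemma chain_fair:
  assumes "k \<in> {1..K}" "\<mu> k j = Some s" "(Some s, \<mu> k i) \<in> P i"
  shows "(i, j) \<notin> pr s"
proof -
  have "\<mu> k i \<noteq> Some s" using assms(3) pref_irrefl by metis
  then show ?thesis
    using chain_stable[OF assms(1)] assms(2,3)
    unfolding stable_def fair_def assigned_def weak_pref_def by blast
qed

lemma envied_by_from_later_envy:
  assumes "k \<in> {1..K}" "k \<le> k'" "k' \<le> K" "\<mu> k x = Some s" "(Some s, \<mu> k' w) \<in> P w"
  shows "(x, w) \<in> envied_by s"
  using assms envy_persists_backward[of k k' s w] unfolding envied_by_def by auto

lemma envied_by_trans: "envied_by s O envied_by s \<subseteq> envied_by s"
proof clarify
  fix x v w
  assume "(x, v) \<in> envied_by s" "(v, w) \<in> envied_by s"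
  then obtain k k' where k: "k \<in> {1..K}" "\<mu> k x = Some s" "(Some s, \<mu> k v) \<in> P v"
    and k': "k' \<in> {1..K}" "\<mu> k' v = Some s" "(Some s, \<mu> k' w) \<in> P w"
    unfolding envied_by_def by blast
  have "k \<le> k'"
    using seated_never_envies_later[of k' k v s] k k' by (cases "k' \<le> k") auto
  with k k' show "(x, w) \<in> envied_by s" using envied_by_from_later_envy[of k k' x s w] by simp
qed

lemma envied_by_prio_envied_by: "envied_by s O pr s O envied_by s \<subseteq> envied_by s"
proof clarify
  fix x y v w
  assume "(x, y) \<in> envied_by s" "(y, v) \<in> pr s" "(v, w) \<in> envied_by s"
  then obtain k k' where k: "k \<in> {1..K}" "\<mu> k x = Some s" "(Some s, \<mu> k y) \<in> P y"
    and k': "k' \<in> {1..K}" "\<mu> k' v = Some s" "(Some s, \<mu> k' w) \<in> P w"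
    unfolding envied_by_def by blast
  \<comment> \<open>Otherwise y still envies s in the matching seating v at s, against fairness.\<close>
  have "k \<le> k'"
  proof (rule ccontr)
    assume "\<not> k \<le> k'"
    then have "(Some s, \<mu> k' y) \<in> P y" using envy_persists_backward[of k' k s y] k k' by auto
    then show False using chain_fair[OF k'(1,2)] \<open>(y, v) \<in> pr s\<close> by blast
  qed
  with k k' show "(x, w) \<in> envied_by s" using envied_by_from_later_envy[of k k' x s w] by simp
qed

lemma envied_by_against_prio:
  assumes "(x, y) \<in> envied_by s"
  shows "(y, x) \<notin> (pr s)\<^sup>="
proof -
  obtain k where k: "k \<in> {1..K}" "\<mu> k x = Some s" "(Some s, \<mu> k y) \<in> P y"
    using assms unfolding envied_by_def by blast
  then have "y \<noteq> x" using seated_never_envies_later by auto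
  with k chain_fair show ?thesis by blast
qed

lemma stable_if_envy_respected:
  assumes "k \<in> {1..K}" and "\<And>s. asym_rel (pr' s) \<and> envied_by s \<subseteq> pr' s"
  shows "stable P q pr' (\<mu> k)"
proof -
  have "fair P pr' (\<mu> k)"
    unfolding fair_def
  proof clarify
    fix s i j
    assume "j \<in> assigned (\<mu> k) s" "i \<notin> assigned (\<mu> k) s"
      "weak_pref P i (Some s) (\<mu> k i)" "(i, j) \<in> pr' s"
    then have "(j, i) \<in> envied_by s"
      using assms(1) unfolding envied_by_def assigned_def weak_pref_def by auto
    then show False using assms(2)[of s] \<open>(i, j) \<in> pr' s\<close> unfolding asym_rel_def by blast
  qed
  then show ?thesis using chain_stable[OF assms(1)] unfolding stable_def by blast
qed

lemma envy_respecting_extension: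
  assumes "finite (UNIV :: 'i set)"
  shows "\<exists>pr' \<in> ext_profiles pr. \<forall>k\<in>{1..K}. stable P q pr' (\<mu> k)"
proof -
  have "\<exists>T. total_order_rel T \<and> pr s \<union> envied_by s \<subseteq> T" for s
  proof -
    have "partial_order_rel ((pr s \<union> envied_by s)\<^sup>+)"
      using partial_order_trancl_Un[OF prio_partial_order envied_by_trans envied_by_prio_envied_by]
        envied_by_against_prio by blast
    then obtain T where "total_order_rel T" "(pr s \<union> envied_by s)\<^sup>+ \<subseteq> T"
      using finite_partial_order_extends_to_total_order[OF assms] by blast
    then show ?thesis by (blast intro: r_into_trancl')
  qed
  then obtain T where T: "\<And>s. total_order_rel (T s) \<and> pr s \<union> envied_by s \<subseteq> T s"
    by metis
  then have "T \<in> ext_profiles pr" by (auto simp: ext_profiles_def extensions_def)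
  moreover have "stable P q T (\<mu> k)" if "k \<in> {1..K}" for k
    using stable_if_envy_respected[OF that] T
    by (auto simp: total_order_rel_def weak_order_rel_def partial_order_rel_def)
  ultimately show ?thesis by blast
qed

end

theorem theorem1:
  fixes P :: "'i::finite \<Rightarrow> ('s::finite option \<times> 's option) set"
    and q :: "'s \<Rightarrow> nat"
    and pr :: "'s \<Rightarrow> ('i \<times> 'i) set"
    and \<mu> :: "nat \<Rightarrow> ('i \<Rightarrow> 's option)"
    and K :: nat
  assumes students: "card (UNIV :: 'i set) \<ge> 3"
    and prefs: "\<forall>i. total_order_rel (P i)"
    and cap: "\<forall>s. q s > 0"
    and prio: "\<forall>s. partial_order_rel (pr s)"
    and K: "K \<ge> 1"
    and stab: "\<forall>k\<in>{1..K}. stable P q pr (\<mu> k)"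
    and dom: "\<forall>k k'. 1 \<le> k \<and> k < k' \<and> k' \<le> K \<longrightarrow> pareto_dominated_by P (\<mu> k) (\<mu> k')"
  shows "\<exists>pr' \<in> ext_profiles pr. \<forall>k\<in>{1..K}. stable P q pr' (\<mu> k)"
proof -
  interpret pareto_chain P q pr \<mu> K
    using prefs prio stab dom
    by unfold_locales (auto simp: total_order_rel_def weak_order_rel_def)
  show ?thesis by (rule envy_respecting_extension) simp
qed

end
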